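(* Let $n\ge2$, $\gamma\in\mathbb{R}$ and $n<p<+\infty$. There exists a constant $C>0$ such that, if $\omega\in C(\mathbb{R}^n_+\times\mathbb{R}^n_+,[0,+\infty))$ satisfies, for every $u\in C^\infty_c(\mathbb{R}^n_+)$ and almost every $x,y\in\mathbb{R}^n_+$, \[ |u(x)-u(y)|\le\omega(x,y)\Big(\int_{\mathbb{R}^n_+}|Du(z)|^pz_n^\gamma\,dz\Big)^{1/p}, \] then for all $x,y\in\mathbb{R}^n_+$, $\omega(x,y)\ge C\,\Theta^0_{1-\frac np,\,1-\frac{n+\gamma}{p}}(x,y)$.
   Context: $\mathbb{R}^n_+=\mathbb{R}^{n-1}\times(0,+\infty)$, points written $x=(x',x_n)$. For $\beta,\kappa\in\mathbb{R}$: $\Theta^0_{\beta,\kappa}(x,y)=\frac{|x-y|^\beta}{\min(x_n,y_n)^{-\kappa}\max(x_n,y_n,|x-y|)^\beta}$ if $\kappa<0$, and $\Theta^0_{\beta,\kappa}(x,y)=\frac{\max(x_n,y_n)^\kappa|x-y|^\beta}{\max(x_n,y_n,|x-y|)^\beta}$ if $\kappa\ge0$. *)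

theory Defs
  imports "HOL-Analysis.Analysis"
begin

text \<open>Upper half-space, with the distinguished (last) coordinate given by index k.\<close>
definition halfspace :: "'n::finite \<Rightarrow> (real^'n) set" where
  "halfspace k = {x. x $ k > 0}"

text \<open>Infinitely differentiable real functions on a set S (all iterated
  Frechet derivatives exist and are continuous).\<close>
coinductive smooth_on :: "'a::euclidean_space set \<Rightarrow> ('a \<Rightarrow> real) \<Rightarrow> bool" where
  "continuous_on S f \<Longrightarrow> f differentiable_on S \<Longrightarrow>
   (\<forall>v. smooth_on S (\<lambda>x. frechet_derivative f (at x) v)) \<Longrightarrow> smooth_on S f"

definition Cinf_c :: "'a::euclidean_space set \<Rightarrow> ('a \<Rightarrow> real) set" where
  "Cinf_c S = {u. smooth_on S u \<and> (\<exists>K. compact K \<and> K \<subseteq> S \<and> (\<forall>x\<in>S - K. u x = 0))}"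

definition grad :: "(real^'n \<Rightarrow> real) \<Rightarrow> real^'n \<Rightarrow> real^'n" where
  "grad u z = (\<chi> i. frechet_derivative u (at z) (axis i 1))"

definition Theta0 :: "'n::finite \<Rightarrow> real \<Rightarrow> real \<Rightarrow> real^'n \<Rightarrow> real^'n \<Rightarrow> real" where
  "Theta0 k \<beta> \<kappa> x y =
     (if \<kappa> < 0 then
        dist x y powr \<beta> /
          (min (x $ k) (y $ k) powr (-\<kappa>) * max (max (x $ k) (y $ k)) (dist x y) powr \<beta>)
      else
        max (x $ k) (y $ k) powr \<kappa> * dist x y powr \<beta> /
          max (max (x $ k) (y $ k)) (dist x y) powr \<beta>)"

end

theory Submission
  imports Defs
begin

(* Test the inequality at (x, y) with a smooth bump u centred at x, of radius
   r = min(|x - y|, x_n)/2.  Then u(x) = e^-1 and u(y) = 0, while |Du| <= 8/r is supported in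
   B_r(x), where z_n is comparable to x_n; so the weighted energy is at most c r^(n-p) x_n^gamma and
   omega(x, y) >= c' r^(1-n/p) x_n^(-gamma/p).  The a.e. inequality holds everywhere because omega
   and u are continuous.  Centring the bump at the higher point when kappa >= 0, and at the lower
   one when kappa < 0, this bound dominates Theta^0(x, y). *)

(* exp(-1/t)/t^m: all derivatives of the flat function exp(-1/t) are combinations of these. *)
definition exp_inv_pow :: "nat \<Rightarrow> real \<Rightarrow> real" where
  "exp_inv_pow m t = (if t > 0 then exp (-1/t) / t^m else 0)"

lemma exp_inv_pow_nonneg: "exp_inv_pow m t \<ge> 0"
  by (simp add: exp_inv_pow_def)

lemma exp_inv_pow_nonpos_eq_0: "t \<le> 0 \<Longrightarrow> exp_inv_pow m t = 0"
  by (simp add: exp_inv_pow_def)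

lemma exp_inv_pow_div_tendsto_0: "((\<lambda>h. exp_inv_pow m h / h) \<longlongrightarrow> 0) (at_right 0)"
proof -
  have "((\<lambda>s. s ^ (m+1) / exp s) \<longlongrightarrow> (0::real)) at_top"
    by (rule tendsto_power_div_exp_0)
  then have "((\<lambda>h. (inverse h) ^ (m+1) / exp (inverse h)) \<longlongrightarrow> (0::real)) (at_right 0)"
    by (rule filterlim_compose[OF _ filterlim_inverse_at_top_right])
  moreover have "\<forall>\<^sub>F h in at_right 0. (inverse h) ^ (m+1) / exp (inverse h) = exp_inv_pow m h / h"
    by (rule eventually_at_rightI[where b=1])
       (auto simp: exp_inv_pow_def exp_minus field_simps power_inverse)
  ultimately show ?thesis
    by (rule Lim_transform_eventually)
qed

lemma exp_inv_pow_has_real_derivative: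
  "(exp_inv_pow m has_real_derivative exp_inv_pow (m+2) t - real m * exp_inv_pow (m+1) t) (at t)"
proof -
  consider "t < 0" | "t = 0" | "t > 0" by linarith
  then show ?thesis
  proof cases
    case 1
    have "((\<lambda>_. 0) has_real_derivative exp_inv_pow (m+2) t - real m * exp_inv_pow (m+1) t) (at t)"
      using 1 by (simp add: exp_inv_pow_def)
    then show ?thesis
      by (rule has_field_derivative_transform_within_open[where S="{..<0}"])
         (use 1 in \<open>auto simp: exp_inv_pow_def\<close>)
  next
    case 2
    have "((\<lambda>h. (exp_inv_pow m h - exp_inv_pow m 0) / (h - 0)) \<longlongrightarrow> 0) (at 0)"
    proof (rule filterlim_split_at)
      show "((\<lambda>h. (exp_inv_pow m h - exp_inv_pow m 0) / (h - 0)) \<longlongrightarrow> 0) (at_left 0)"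
        by (rule Lim_transform_eventually[where f="\<lambda>_. 0", OF tendsto_const],
            rule eventually_at_leftI[where a="-1"]) (auto simp: exp_inv_pow_def)
      show "((\<lambda>h. (exp_inv_pow m h - exp_inv_pow m 0) / (h - 0)) \<longlongrightarrow> 0) (at_right 0)"
        using exp_inv_pow_div_tendsto_0[of m] by (simp add: exp_inv_pow_def)
    qed
    then show ?thesis
      using 2 by (simp add: has_field_derivative_iff exp_inv_pow_def)
  next
    case 3
    have "((\<lambda>t. exp (-1/t) / t^m) has_real_derivative
            exp_inv_pow (m+2) t - real m * exp_inv_pow (m+1) t) (at t)"
      using 3 by (auto intro!: derivative_eq_intros simp: exp_inv_pow_def)
                 (cases m; auto simp: field_simps power_Suc)
    then show ?thesis
      by (rule has_field_derivative_transform_within_open[where S="{0<..}"])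
         (use 3 in \<open>auto simp: exp_inv_pow_def\<close>)
  qed
qed

lemma exp_inv_pow_2_le: "exp_inv_pow 2 t \<le> 4"
proof (cases "t > 0")
  case True
  define s where "s = 1 / t"
  have s: "s > 0"
    using True by (simp add: s_def)
  have "s/2 \<le> exp (s/2)"
    using exp_ge_add_one_self[of "s/2"] by linarith
  then have "(s/2)^2 \<le> exp (s/2) ^ 2"
    using s by (intro power_mono) auto
  then have "s^2 \<le> 4 * exp s"
    by (simp add: exp_double[symmetric] power2_eq_square[of "exp _"] power_divide)
  have "exp_inv_pow 2 t = s^2 / exp s"
    using True by (simp add: exp_inv_pow_def s_def exp_minus field_simps)
  also have "\<dots> \<le> 4"
    using \<open>s^2 \<le> 4 * exp s\<close> by (simp add: divide_le_eq mult.commute)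
  finally show ?thesis .
qed (simp add: exp_inv_pow_def)

lemma has_derivative_exp_inv_pow_comp:
  assumes "(f has_derivative f') (at x)"
  shows "((\<lambda>z. exp_inv_pow m (f z)) has_derivative
           (\<lambda>v. (exp_inv_pow (m+2) (f x) - real m * exp_inv_pow (m+1) (f x)) * f' v)) (at x)"
  using has_derivative_compose[OF assms
      exp_inv_pow_has_real_derivative[of m "f x", unfolded has_field_derivative_def]]
  by (simp add: o_def)

(* Since the class is closed under directional derivatives, all its members are C^infinity;
   this spares computing iterated derivatives of the bump. *)

inductive_set bump_algebra :: "('a::real_inner \<Rightarrow> real) set" where
  const: "(\<lambda>_. c) \<in> bump_algebra"
| inner_left: "(\<lambda>z. z \<bullet> a) \<in> bump_algebra"
| inner_self: "(\<lambda>z. z \<bullet> z) \<in> bump_algebra"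
| add: "f \<in> bump_algebra \<Longrightarrow> g \<in> bump_algebra \<Longrightarrow> (\<lambda>z. f z + g z) \<in> bump_algebra"
| mult: "f \<in> bump_algebra \<Longrightarrow> g \<in> bump_algebra \<Longrightarrow> (\<lambda>z. f z * g z) \<in> bump_algebra"
| exp_inv_pow: "f \<in> bump_algebra \<Longrightarrow> (\<lambda>z. exp_inv_pow m (f z)) \<in> bump_algebra"

lemma bump_algebra_diff:
  assumes "f \<in> bump_algebra" "g \<in> bump_algebra"
  shows "(\<lambda>z. f z - g z) \<in> bump_algebra"
  using bump_algebra.add[OF assms(1) bump_algebra.mult[OF bump_algebra.const[of "-1"] assms(2)]]
  by simp

lemma bump_algebra_has_derivative:
  assumes "f \<in> bump_algebra"
  shows "\<exists>D. (\<forall>x. (f has_derivative D x) (at x)) \<and> (\<forall>v. (\<lambda>x. D x v) \<in> bump_algebra)"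
  using assms
proof induction
  case (const c)
  show ?case
    by (rule exI[where x="\<lambda>x v. 0"]) (auto intro: bump_algebra.const)
next
  case (inner_left a)
  show ?case
    by (rule exI[where x="\<lambda>x v. v \<bullet> a"]) (auto intro!: bump_algebra.const derivative_eq_intros)
next
  case inner_self
  have "(\<lambda>x. x \<bullet> v + v \<bullet> x) \<in> bump_algebra" for v :: 'a
    using bump_algebra.add[OF bump_algebra.inner_left[of v] bump_algebra.inner_left[of v]]
    by (simp add: inner_commute)
  then show ?case
    by (intro exI[where x="\<lambda>x v. x \<bullet> v + v \<bullet> x"]) (auto intro!: derivative_eq_intros)
next
  case (add f g)
  then obtain Df Dg where
    "\<forall>x. (f has_derivative Df x) (at x)" "\<forall>v. (\<lambda>x. Df x v) \<in> bump_algebra"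
    "\<forall>x. (g has_derivative Dg x) (at x)" "\<forall>v. (\<lambda>x. Dg x v) \<in> bump_algebra"
    by blast
  then show ?case
    by (intro exI[where x="\<lambda>x v. Df x v + Dg x v"])
       (auto intro!: derivative_eq_intros bump_algebra.add)
next
  case (mult f g)
  then obtain Df Dg where
    "\<forall>x. (f has_derivative Df x) (at x)" "\<forall>v. (\<lambda>x. Df x v) \<in> bump_algebra"
    "\<forall>x. (g has_derivative Dg x) (at x)" "\<forall>v. (\<lambda>x. Dg x v) \<in> bump_algebra"
    by blast
  then show ?case
    using mult.hyps
    by (intro exI[where x="\<lambda>x v. f x * Dg x v + Df x v * g x"])
       (auto intro!: derivative_eq_intros bump_algebra.add bump_algebra.mult)
next
  case (exp_inv_pow f m)
  then obtain Df where
    "\<forall>x. (f has_derivative Df x) (at x)" "\<forall>v. (\<lambda>x. Df x v) \<in> bump_algebra"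
    by blast
  then show ?case
    using exp_inv_pow.hyps
    by (intro exI[where x="\<lambda>x v. (exp_inv_pow (m+2) (f x) - real m * exp_inv_pow (m+1) (f x)) * Df x v"])
       (auto intro!: bump_algebra.intros bump_algebra_diff has_derivative_exp_inv_pow_comp[of _ _ _ m, simplified])
qed

lemma smooth_on_bump_algebra:
  fixes f :: "'a::euclidean_space \<Rightarrow> real"
  assumes "f \<in> bump_algebra"
  shows "smooth_on S f"
  using assms
proof (coinduction arbitrary: f)
  case smooth_on
  then obtain D where D: "\<forall>x. (f has_derivative D x) (at x)" "\<forall>v. (\<lambda>x. D x v) \<in> bump_algebra"
    using bump_algebra_has_derivative by blast
  have "frechet_derivative f (at x) = D x" for x
    using frechet_derivative_at[OF D(1)[rule_format, of x]] by simp
  with D show ?case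
    by (auto intro!: continuous_at_imp_continuous_on has_derivative_continuous
        differentiable_at_imp_differentiable_on differentiableI)
qed

definition bump :: "'a::real_inner \<Rightarrow> real \<Rightarrow> 'a \<Rightarrow> real" where
  "bump P r z = exp_inv_pow 0 (1 - ((z - P) \<bullet> (z - P)) / r^2)"

lemma bump_in_bump_algebra: "bump P r \<in> bump_algebra"
proof -
  have "bump P r = (\<lambda>z. exp_inv_pow 0 (1 + (-1/r^2) * (z \<bullet> z + ((-2) * (z \<bullet> P) + P \<bullet> P))))"
    by (auto simp: fun_eq_iff bump_def inner_diff_left inner_diff_right inner_commute field_simps)
  also have "\<dots> \<in> bump_algebra"
    by (intro bump_algebra.intros)
  finally show ?thesis .
qed

lemma has_derivative_bump:
  assumes "r \<noteq> 0"
  shows "(bump P r has_derivative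
     (\<lambda>v. exp_inv_pow 2 (1 - ((z - P) \<bullet> (z - P)) / r^2) * (-2/r^2 * ((z - P) \<bullet> v)))) (at z)"
proof -
  let ?g = "\<lambda>z. 1 - ((z - P) \<bullet> (z - P)) / r^2"
  have g: "(?g has_derivative (\<lambda>v. -2/r^2 * ((z - P) \<bullet> v))) (at z)"
    using assms
    by (auto intro!: derivative_eq_intros simp: fun_eq_iff inner_commute field_simps eval_nat_numeral)
  have E: "(exp_inv_pow 0 has_derivative (\<lambda>h. exp_inv_pow 2 (?g z) * h)) (at (?g z))"
    using exp_inv_pow_has_real_derivative[of 0 "?g z"] by (simp add: has_field_derivative_def numeral_2_eq_2)
  show ?thesis
    using has_derivative_compose[OF g E] by (simp add: o_def bump_def[abs_def])
qed

lemma continuous_on_bump: "r \<noteq> 0 \<Longrightarrow> continuous_on S (bump P r)"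
  using has_derivative_bump
  by (intro continuous_at_imp_continuous_on ballI) (blast intro: has_derivative_continuous)

lemma grad_bump:
  assumes "r \<noteq> 0"
  shows "grad (bump P r) z = (exp_inv_pow 2 (1 - ((z - P) \<bullet> (z - P)) / r^2) * (-2/r^2)) *\<^sub>R (z - P)"
  unfolding grad_def frechet_derivative_at[OF has_derivative_bump[OF assms], symmetric]
  by (auto simp: vec_eq_iff inner_axis)

lemma inner_self_ge_if_dist_ge:
  assumes "0 \<le> r" "r \<le> dist z P"
  shows "r^2 \<le> (z - P) \<bullet> (z - P)"
  using assms by (metis dist_norm power2_norm_eq_inner power_mono)

lemma bump_eq_0_outside_ball:
  assumes "r > 0" "r \<le> dist z P"
  shows "bump P r z = 0"
  using inner_self_ge_if_dist_ge[of r z P] assms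
  by (simp add: bump_def exp_inv_pow_nonpos_eq_0 field_simps)

lemma bump_center: "r \<noteq> 0 \<Longrightarrow> bump P r P = exp (-1)"
  by (simp add: bump_def exp_inv_pow_def)

lemma norm_grad_bump_le:
  assumes "r > 0"
  shows "norm (grad (bump P r) z) \<le> (if dist z P < r then 8 / r else 0)"
proof -
  let ?t = "1 - ((z - P) \<bullet> (z - P)) / r^2"
  have n: "norm (grad (bump P r) z) = exp_inv_pow 2 ?t * (2/r^2) * dist z P"
    using assms by (simp add: grad_bump exp_inv_pow_nonneg abs_mult dist_norm)
  show ?thesis
  proof (cases "dist z P < r")
    case True
    have "exp_inv_pow 2 ?t * (2/r^2) * dist z P \<le> 4 * (2/r^2) * r"
      using True assms by (intro mult_mono exp_inv_pow_2_le) (auto simp: exp_inv_pow_nonneg)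
    also have "\<dots> = 8 / r"
      using assms by (simp add: power2_eq_square)
    finally show ?thesis
      using True n by simp
  next
    case False
    then have "?t \<le> 0"
      using assms inner_self_ge_if_dist_ge[of r z P] by (simp add: field_simps)
    then show ?thesis
      using False n by (simp add: exp_inv_pow_nonpos_eq_0)
  qed
qed

lemma abs_component_diff_le_if_mem_cball:
  fixes P z :: "real^'n"
  assumes "z \<in> cball P r"
  shows "\<bar>z $ k - P $ k\<bar> \<le> r"
  using component_le_norm_cart[of "z - P" k] assms by (simp add: dist_norm norm_minus_commute)

lemma cball_subset_halfspace:
  assumes "r < P $ k"
  shows "cball P r \<subseteq> halfspace k"
  using abs_component_diff_le_if_mem_cball[of _ P r k] assms by (force simp: halfspace_def)

lemma open_halfspace: "open (halfspace k)"
  unfolding halfspace_def by (intro open_Collect_less continuous_intros)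

lemma bump_in_Cinf_c:
  assumes "0 < r" "r < P $ k"
  shows "bump P r \<in> Cinf_c (halfspace k)"
  unfolding Cinf_c_def
proof (intro CollectI conjI exI[where x="cball P r"])
  show "smooth_on (halfspace k) (bump P r)"
    by (rule smooth_on_bump_algebra[OF bump_in_bump_algebra])
  show "cball P r \<subseteq> halfspace k"
    using assms(2) by (rule cball_subset_halfspace)
  show "\<forall>x\<in>halfspace k - cball P r. bump P r x = 0"
    using assms(1) by (auto intro!: bump_eq_0_outside_ball simp: dist_commute)
qed simp

definition weighted_energy :: "'n::finite \<Rightarrow> real \<Rightarrow> real \<Rightarrow> (real^'n \<Rightarrow> real) \<Rightarrow> real" where
  "weighted_energy k p \<gamma> u = integral (halfspace k) (\<lambda>z. norm (grad u z) powr p * (z $ k) powr \<gamma>)"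

lemma integral_nonneg_unconditional:
  fixes f :: "'a::euclidean_space \<Rightarrow> real"
  assumes "\<And>x. x \<in> S \<Longrightarrow> 0 \<le> f x"
  shows "0 \<le> integral S f"
  using assms by (cases "f integrable_on S") (auto intro: integral_nonneg simp: not_integrable_integral)

lemma weighted_energy_nonneg: "0 \<le> weighted_energy k p \<gamma> u"
  unfolding weighted_energy_def by (rule integral_nonneg_unconditional) simp

lemma integral_le_bound_on_cball:
  fixes f :: "'a::euclidean_space \<Rightarrow> real"
  assumes "cball c r \<subseteq> S" "0 \<le> M"
    and "\<And>z. z \<in> S \<Longrightarrow> f z \<le> (if z \<in> cball c r then M else 0)"
  shows "integral S f \<le> M * measure lborel (cball c r)"
proof -
  let ?g = "\<lambda>z. if z \<in> cball c r then M else 0"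
  have "((\<lambda>_. M) has_integral M * measure lborel (cball c r)) (cball c r)"
    using has_integral_mult_right[OF has_integral_measure_lborel[of "cball c r"], of M]
      emeasure_bounded_finite[of "cball c r"]
    by simp
  then have g: "(?g has_integral M * measure lborel (cball c r)) S"
    using assms(1) by (subst has_integral_restrict_Int) (simp add: Int_absorb2)
  show ?thesis
  proof (cases "f integrable_on S")
    case True
    then show ?thesis
      using g assms(3) by (intro has_integral_le[OF integrable_integral g]) auto
  next
    case False
    then show ?thesis
      using assms(2) by (simp add: not_integrable_integral)
  qed
qed

lemma powr_le_add_powr_endpoints:
  fixes a b t \<gamma> :: real
  assumes "0 < a" "a \<le> t" "t \<le> b"
  shows "t powr \<gamma> \<le> a powr \<gamma> + b powr \<gamma>"
proof (cases "\<gamma> \<ge> 0")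
  case True
  then have "t powr \<gamma> \<le> b powr \<gamma>"
    using assms by (intro powr_mono2) auto
  then show ?thesis
    by (smt (verit) powr_ge_zero)
next
  case False
  then have "t powr \<gamma> \<le> a powr \<gamma>"
    using assms by (intro powr_mono2') auto
  then show ?thesis
    by (smt (verit) powr_ge_zero)
qed

lemma weighted_energy_bump_le:
  fixes P :: "real^'n"
  assumes r: "0 < r" "r \<le> P $ k / 2" and p: "0 < p"
  shows "weighted_energy k p \<gamma> (bump P r)
           \<le> (8 / r) powr p * ((P $ k / 2) powr \<gamma> + (3 * P $ k / 2) powr \<gamma>) * measure lborel (cball P r)"
  unfolding weighted_energy_def
proof (rule integral_le_bound_on_cball)
  show "cball P r \<subseteq> halfspace k"
    using r by (intro cball_subset_halfspace) auto
  show "0 \<le> (8 / r) powr p * ((P $ k / 2) powr \<gamma> + (3 * P $ k / 2) powr \<gamma>)"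
    by simp
next
  fix z :: "real^'n"
  show "norm (grad (bump P r) z) powr p * z $ k powr \<gamma>
          \<le> (if z \<in> cball P r then (8 / r) powr p * ((P $ k / 2) powr \<gamma> + (3 * P $ k / 2) powr \<gamma>) else 0)"
  proof (cases "z \<in> cball P r")
    case True
    have "norm (grad (bump P r) z) powr p \<le> (8 / r) powr p"
      using norm_grad_bump_le[OF r(1), of P z] p r by (intro powr_mono2) (auto split: if_splits)
    moreover have "z $ k powr \<gamma> \<le> (P $ k / 2) powr \<gamma> + (3 * P $ k / 2) powr \<gamma>"
      using abs_component_diff_le_if_mem_cball[OF True, of k] r
      by (intro powr_le_add_powr_endpoints) auto
    ultimately show ?thesis
      using True by (simp add: mult_mono)
  next
    case False
    then have "grad (bump P r) z = 0"
      using norm_grad_bump_le[OF r(1), of P z] by (simp add: dist_commute)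
    then show ?thesis
      using False p r by simp
  qed
qed

definition bump_energy_const :: "nat \<Rightarrow> real \<Rightarrow> real \<Rightarrow> real" where
  "bump_energy_const n p \<gamma> = 8 * (unit_ball_vol (real n) * ((1/2) powr \<gamma> + (3/2) powr \<gamma>)) powr (1/p)"

lemma bump_energy_const_pos: "0 < bump_energy_const n p \<gamma>"
proof -
  have "0 < unit_ball_vol (real n) * ((1/2) powr \<gamma> + (3/2) powr \<gamma>)"
    by (intro mult_pos_pos add_pos_pos) auto
  then show ?thesis
    unfolding bump_energy_const_def by (metis powr_gt_zero less_irrefl mult_pos_pos zero_less_numeral)
qed

lemma weighted_energy_bump_root_le:
  fixes P :: "real^'n"
  assumes r: "0 < r" "r \<le> P $ k / 2" and p: "0 < p"
  shows "weighted_energy k p \<gamma> (bump P r) powr (1/p)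
           \<le> bump_energy_const CARD('n) p \<gamma> * r powr (real CARD('n) / p - 1) * P $ k powr (\<gamma> / p)"
proof -
  define n where "n = CARD('n)"
  define a where "a = P $ k"
  define V where "V = unit_ball_vol (real n)"
  define c where "c = (1/2) powr \<gamma> + (3/2) powr \<gamma>"
  have a: "0 < a" and V: "0 < V" and c: "0 < c"
    using r by (simp_all add: a_def V_def c_def add_pos_pos)
  have "(a / 2) powr \<gamma> + (3 * a / 2) powr \<gamma> = a powr \<gamma> * c"
    using a powr_mult[of a "1/2" \<gamma>] powr_mult[of a "3/2" \<gamma>] by (simp add: c_def distrib_left mult.commute)
  then have "weighted_energy k p \<gamma> (bump P r) \<le> (8 / r) powr p * a powr \<gamma> * c * (V * r ^ n)"
    using weighted_energy_bump_le[OF r p, of \<gamma>] r by (simp add: a_def V_def n_def content_cball)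
  then have "weighted_energy k p \<gamma> (bump P r) powr (1/p)
               \<le> ((8 / r) powr p * a powr \<gamma> * c * (V * r ^ n)) powr (1/p)"
    using weighted_energy_nonneg p by (intro powr_mono2) auto
  also have "\<dots> = 8 / r * a powr (\<gamma> / p) * (V * c) powr (1/p) * r powr (real n / p)"
    using r a V c p by (simp add: powr_mult powr_powr powr_realpow[symmetric] field_simps)
  also have "\<dots> = 8 * (V * c) powr (1/p) * r powr (real n / p - 1) * a powr (\<gamma> / p)"
    using r by (simp add: powr_diff field_simps)
  finally show ?thesis
    by (simp add: bump_energy_const_def a_def V_def c_def n_def)
qed

lemma AE_lborel_ex_in_open:
  fixes U :: "'a::euclidean_space set"
  assumes "open U" "x \<in> U" "AE y in lborel. P y"
  shows "\<exists>y\<in>U. P y"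
proof (rule ccontr)
  assume "\<not> (\<exists>y\<in>U. P y)"
  obtain e where e: "0 < e" "ball x e \<subseteq> U"
    using assms(1,2) openE by blast
  have "AE y in lborel. y \<notin> ball x e"
    using assms(3) by (rule eventually_mono) (use \<open>\<not> (\<exists>y\<in>U. P y)\<close> e in auto)
  then have "emeasure lborel (ball x e) = 0"
    by (subst (asm) AE_iff_measurable[where N="ball x e"]) auto
  with e show False
    by (simp add: emeasure_ball) (metis less_irrefl of_nat_0_le_iff unit_ball_vol_pos)
qed

lemma AE_lborel_le_imp_le_on_open:
  fixes f g :: "'a::euclidean_space \<Rightarrow> real"
  assumes "open S" "continuous_on S f" "continuous_on S g"
    and "AE x in lborel. x \<in> S \<longrightarrow> f x \<le> g x" and "x \<in> S"
  shows "f x \<le> g x"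
proof (rule ccontr)
  assume "\<not> f x \<le> g x"
  have "open (S \<inter> (\<lambda>x. f x - g x) -` {0<..})"
    using assms(1-3) by (intro continuous_open_preimage continuous_intros) auto
  moreover have "x \<in> S \<inter> (\<lambda>x. f x - g x) -` {0<..}"
    using assms(5) \<open>\<not> f x \<le> g x\<close> by simp
  ultimately show False
    using AE_lborel_ex_in_open[OF _ _ assms(4)] by fastforce
qed

lemma AE_test_inequality_imp_everywhere:
  fixes \<omega> :: "'a::euclidean_space \<Rightarrow> 'a \<Rightarrow> real" and u :: "'a \<Rightarrow> real"
  assumes "open H" "continuous_on (H \<times> H) (\<lambda>(x, y). \<omega> x y)" "continuous_on H u"
    and "AE xy in lborel. fst xy \<in> H \<longrightarrow> snd xy \<in> H \<longrightarrow>
           \<bar>u (fst xy) - u (snd xy)\<bar> \<le> \<omega> (fst xy) (snd xy) * c"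
    and "x \<in> H" "y \<in> H"
  shows "\<bar>u x - u y\<bar> \<le> \<omega> x y * c"
proof -
  have lhs: "continuous_on (H \<times> H) (\<lambda>xy. \<bar>u (fst xy) - u (snd xy)\<bar>)"
    using assms(3) by (intro continuous_intros continuous_on_compose2[OF assms(3)]) auto
  have rhs: "continuous_on (H \<times> H) (\<lambda>xy. \<omega> (fst xy) (snd xy) * c)"
    using assms(2) by (intro continuous_intros) (simp add: case_prod_beta')
  have ae: "AE xy in lborel. xy \<in> H \<times> H \<longrightarrow>
                   \<bar>u (fst xy) - u (snd xy)\<bar> \<le> \<omega> (fst xy) (snd xy) * c"
    using assms(4) by (rule eventually_mono) (auto simp: mem_Times_iff)
  show ?thesis
    using AE_lborel_le_imp_le_on_open[OF open_Times[OF assms(1,1)] lhs rhs ae, of "(x, y)"] assms(5,6)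
    by simp
qed

lemma div_le_of_le_mult_bounded:
  fixes e w I B :: real
  assumes "0 < e" "e \<le> w * I" "0 \<le> I" "I \<le> B"
  shows "e / B \<le> w"
proof -
  have "0 < w"
    using assms by (smt (verit) mult_nonpos_nonneg)
  then have "e \<le> w * B"
    using assms by (smt (verit) mult_left_mono)
  moreover have "0 < B"
    using assms by (smt (verit) mult_nonneg_nonpos \<open>0 < w\<close>)
  ultimately show ?thesis
    by (simp add: divide_le_eq mult.commute)
qed

lemma bump_test_lower_bound:
  fixes k :: "'n::finite" and \<omega> :: "real^'n \<Rightarrow> real^'n \<Rightarrow> real"
  assumes p: "0 < p"
    and cont: "continuous_on (halfspace k \<times> halfspace k) (\<lambda>(x, y). \<omega> x y)"
    and test: "\<forall>u\<in>Cinf_c (halfspace k).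
          AE xy in lborel. fst xy \<in> halfspace k \<longrightarrow> snd xy \<in> halfspace k \<longrightarrow>
            \<bar>u (fst xy) - u (snd xy)\<bar> \<le> \<omega> (fst xy) (snd xy) * weighted_energy k p \<gamma> u powr (1 / p)"
    and P: "P \<in> halfspace k" and Q: "Q \<in> halfspace k" and "P \<noteq> Q"
  defines "r \<equiv> min (dist P Q) (P $ k) / 2"
  defines "L \<equiv> exp (-1) / bump_energy_const CARD('n) p \<gamma> * r powr (1 - real CARD('n) / p) * P $ k powr (- (\<gamma> / p))"
  shows "L \<le> \<omega> P Q" and "L \<le> \<omega> Q P"
proof -
  have Pk: "0 < P $ k"
    using P by (simp add: halfspace_def)
  have r: "0 < r" "r \<le> P $ k / 2" "r < dist P Q" "r < P $ k"
    using Pk \<open>P \<noteq> Q\<close> by (auto simp: r_def min_def)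
  define E where "E = weighted_energy k p \<gamma> (bump P r) powr (1 / p)"
  define B where "B = bump_energy_const CARD('n) p \<gamma> * r powr (real CARD('n) / p - 1) * P $ k powr (\<gamma> / p)"
  have EB: "0 \<le> E" "E \<le> B"
    unfolding E_def B_def using weighted_energy_bump_root_le[OF r(1,2) p] by simp_all
  have "r powr (1 - real CARD('n) / p) = 1 / r powr (real CARD('n) / p - 1)"
    using powr_minus_divide[of r "real CARD('n) / p - 1"] by simp
  then have "L = exp (-1) / B"
    by (simp add: L_def B_def powr_minus_divide)
  have everywhere: "\<bar>bump P r x - bump P r y\<bar> \<le> \<omega> x y * E"
    if "x \<in> halfspace k" "y \<in> halfspace k" for x y
    unfolding E_def
  proof (rule AE_test_inequality_imp_everywhere[OF open_halfspace cont _ _ that])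
    show "continuous_on (halfspace k) (bump P r)"
      using r(1) by (intro continuous_on_bump) simp
    show "AE xy in lborel. fst xy \<in> halfspace k \<longrightarrow> snd xy \<in> halfspace k \<longrightarrow>
            \<bar>bump P r (fst xy) - bump P r (snd xy)\<bar>
              \<le> \<omega> (fst xy) (snd xy) * weighted_energy k p \<gamma> (bump P r) powr (1 / p)"
      using test bump_in_Cinf_c[OF r(1,4)] by blast
  qed
  have "\<bar>bump P r P - bump P r Q\<bar> = exp (-1)"
    using r bump_center[of r P] bump_eq_0_outside_ball[of r Q P] by (simp add: dist_commute)
  then have "exp (-1) \<le> \<omega> P Q * E" "exp (-1) \<le> \<omega> Q P * E"
    using everywhere[OF P Q] everywhere[OF Q P] by (simp_all add: abs_minus_commute)
  then show "L \<le> \<omega> P Q" "L \<le> \<omega> Q P"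
    unfolding \<open>L = exp (-1) / B\<close> using EB by (auto intro: div_le_of_le_mult_bounded)
qed

lemma Theta0_eq_of_nonneg_exponent:
  assumes "0 < x $ k" "0 < y $ k" "x \<noteq> y" "0 \<le> \<beta> - g"
  shows "Theta0 k \<beta> (\<beta> - g) x y
           = min (dist x y) (max (x $ k) (y $ k)) powr \<beta> * max (x $ k) (y $ k) powr (- g)"
proof -
  define A where "A = max (x $ k) (y $ k)"
  define d where "d = dist x y"
  have "0 < A" "0 < d"
    using assms by (auto simp: A_def d_def max_def)
  have "A powr (\<beta> - g) = A powr \<beta> * A powr (- g)"
    by (simp add: powr_add[symmetric])
  then have "Theta0 k \<beta> (\<beta> - g) x y = A powr \<beta> * A powr (- g) * d powr \<beta> / max A d powr \<beta>"
    using assms(4) by (simp add: Theta0_def A_def d_def)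
  also have "\<dots> = min d A powr \<beta> * A powr (- g)"
    using \<open>0 < A\<close> \<open>0 < d\<close> by (cases "d \<le> A") (auto simp: max_def min_def)
  finally show ?thesis
    by (simp add: A_def d_def)
qed

lemma Theta0_le_of_neg_exponent:
  assumes "0 < x $ k" "0 < y $ k" "x \<noteq> y" "0 \<le> \<beta>" "\<beta> - g < 0"
  shows "Theta0 k \<beta> (\<beta> - g) x y
           \<le> min (dist x y) (min (x $ k) (y $ k)) powr \<beta> * min (x $ k) (y $ k) powr (- g)"
proof -
  define B where "B = min (x $ k) (y $ k)"
  define d where "d = dist x y"
  define M where "M = max (max (x $ k) (y $ k)) d"
  have "0 < B" "0 < d" "B \<le> M" "d \<le> M"
    using assms by (auto simp: B_def d_def M_def)
  then have pos: "0 < B powr \<beta>" "0 < d powr \<beta>" "0 < B powr (- g)" "0 < M powr \<beta>"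
    by auto
  have "d powr \<beta> * B powr \<beta> \<le> min d B powr \<beta> * M powr \<beta>"
  proof (cases "d \<le> B")
    case True
    then show ?thesis
      using pos \<open>B \<le> M\<close> \<open>0 < B\<close> assms(4) by (simp add: min_def powr_mono2)
  next
    case False
    then show ?thesis
      using pos \<open>d \<le> M\<close> \<open>0 < d\<close> assms(4) by (simp add: min_def powr_mono2 mult.commute)
  qed
  then have key: "d powr \<beta> * B powr \<beta> / M powr \<beta> \<le> min d B powr \<beta>"
    using pos by (simp add: divide_le_eq)
  have "B powr (- (\<beta> - g)) = 1 / (B powr \<beta> * B powr (- g))"
    using \<open>0 < B\<close> by (simp add: powr_diff powr_minus_divide)
  then have "Theta0 k \<beta> (\<beta> - g) x y = d powr \<beta> * B powr \<beta> / M powr \<beta> * B powr (- g)"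
    using assms(5) by (simp add: Theta0_def B_def d_def M_def)
  also have "\<dots> \<le> min d B powr \<beta> * B powr (- g)"
    using key pos by (intro mult_right_mono) auto
  finally show ?thesis
    by (simp add: B_def d_def)
qed

lemma Theta0_le_at_endpoint:
  assumes "x \<in> halfspace k" "y \<in> halfspace k" "x \<noteq> y" "0 \<le> \<beta>"
  obtains P Q where "(P, Q) = (x, y) \<or> (P, Q) = (y, x)"
    and "Theta0 k \<beta> (\<beta> - g) x y \<le> min (dist P Q) (P $ k) powr \<beta> * P $ k powr (- g)"
proof -
  have xy: "0 < x $ k" "0 < y $ k"
    using assms by (simp_all add: halfspace_def)
  show ?thesis
  proof (cases "\<beta> - g < 0")
    case True
    then show ?thesis
      using that[of x y] that[of y x] Theta0_le_of_neg_exponent[OF xy assms(3,4) True]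
      by (cases "x $ k \<le> y $ k") (auto simp: min_def dist_commute)
  next
    case False
    then show ?thesis
      using that[of x y] that[of y x] Theta0_eq_of_nonneg_exponent[OF xy assms(3), of \<beta> g]
      by (cases "x $ k \<le> y $ k") (auto simp: max_def dist_commute)
  qed
qed

definition Theta0_const :: "nat \<Rightarrow> real \<Rightarrow> real \<Rightarrow> real" where
  "Theta0_const n p \<gamma> = exp (-1) / bump_energy_const n p \<gamma> / 2 powr (1 - real n / p)"

lemma Theta0_const_pos: "0 < Theta0_const n p \<gamma>"
  using bump_energy_const_pos by (simp add: Theta0_const_def)

lemma Theta0_lower_bound:
  fixes k :: "'n::finite" and \<omega> :: "real^'n \<Rightarrow> real^'n \<Rightarrow> real"
  assumes "real CARD('n) < p"
    and cont: "continuous_on (halfspace k \<times> halfspace k) (\<lambda>(x, y). \<omega> x y)"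
    and nonneg: "\<forall>x\<in>halfspace k. \<forall>y\<in>halfspace k. \<omega> x y \<ge> 0"
    and test: "\<forall>u\<in>Cinf_c (halfspace k).
          AE xy in lborel. fst xy \<in> halfspace k \<longrightarrow> snd xy \<in> halfspace k \<longrightarrow>
            \<bar>u (fst xy) - u (snd xy)\<bar> \<le> \<omega> (fst xy) (snd xy) * weighted_energy k p \<gamma> u powr (1 / p)"
    and x: "x \<in> halfspace k" and y: "y \<in> halfspace k"
  shows "Theta0_const CARD('n) p \<gamma> * Theta0 k (1 - real CARD('n) / p) (1 - (real CARD('n) + \<gamma>) / p) x y \<le> \<omega> x y"
proof -
  define \<beta> where "\<beta> = 1 - real CARD('n) / p"
  define C where "C = Theta0_const CARD('n) p \<gamma>"
  have p: "0 < p"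
    using assms(1) by (smt (verit) of_nat_0_le_iff)
  have "0 < \<beta>"
    using assms(1) p by (simp add: \<beta>_def field_simps)
  have "0 < C"
    by (simp add: C_def Theta0_const_pos)
  have \<kappa>: "1 - (real CARD('n) + \<gamma>) / p = \<beta> - \<gamma> / p"
    by (simp add: \<beta>_def add_divide_distrib)
  show ?thesis
  proof (cases "x = y")
    case True
    then show ?thesis
      using nonneg x by (simp add: Theta0_def)
  next
    case False
    then obtain P Q where PQ: "(P, Q) = (x, y) \<or> (P, Q) = (y, x)"
      and Theta: "Theta0 k \<beta> (\<beta> - \<gamma> / p) x y \<le> min (dist P Q) (P $ k) powr \<beta> * P $ k powr (- (\<gamma> / p))"
      using Theta0_le_at_endpoint[OF x y False, of \<beta>] \<open>0 < \<beta>\<close> by auto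
    have "P \<in> halfspace k" "Q \<in> halfspace k" "P \<noteq> Q"
      using PQ x y False by auto
    note bound = bump_test_lower_bound[OF p cont test this]
    have "C * Theta0 k \<beta> (\<beta> - \<gamma> / p) x y \<le> C * (min (dist P Q) (P $ k) powr \<beta> * P $ k powr (- (\<gamma> / p)))"
      using Theta \<open>0 < C\<close> by simp
    also have "\<dots> = exp (-1) / bump_energy_const CARD('n) p \<gamma> * (min (dist P Q) (P $ k) / 2) powr \<beta>
                      * P $ k powr (- (\<gamma> / p))"
      by (simp add: C_def Theta0_const_def \<beta>_def powr_divide)
    also have "\<dots> \<le> \<omega> x y"
      using PQ bound unfolding \<beta>_def by auto
    finally show ?thesis
      unfolding C_def \<kappa> \<beta>_def .
  qed
qed

theorem theorem1p5:
  fixes k :: "'n::finite" and \<gamma> p :: real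
  assumes "CARD('n) \<ge> 2" and "real CARD('n) < p"
  shows "\<exists>C>0. \<forall>\<omega> :: real^'n \<Rightarrow> real^'n \<Rightarrow> real.
     continuous_on (halfspace k \<times> halfspace k) (\<lambda>(x, y). \<omega> x y)
     \<and> (\<forall>x\<in>halfspace k. \<forall>y\<in>halfspace k. \<omega> x y \<ge> 0)
     \<and> (\<forall>u\<in>Cinf_c (halfspace k).
          AE xy in lborel. fst xy \<in> halfspace k \<longrightarrow> snd xy \<in> halfspace k \<longrightarrow>
            \<bar>u (fst xy) - u (snd xy)\<bar>
              \<le> \<omega> (fst xy) (snd xy) *
                 (integral (halfspace k) (\<lambda>z. norm (grad u z) powr p * (z $ k) powr \<gamma>)) powr (1 / p))
     \<longrightarrow> (\<forall>x\<in>halfspace k. \<forall>y\<in>halfspace k.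
            \<omega> x y \<ge> C * Theta0 k (1 - real CARD('n) / p) (1 - (real CARD('n) + \<gamma>) / p) x y)"
proof -
  show ?thesis
    unfolding weighted_energy_def[symmetric]
    using Theta0_lower_bound[OF assms(2)] Theta0_const_pos by blast
qed

end
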